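(* For $n\ge 1$ let $f_n$ denote the number of noncrossing linked partitions of $[n]=\{1,\dots,n\}$. Then $f_1=1$ and for every $n\ge 1$, $$f_{n+1}=f_n+f_1f_n+f_2f_{n-1}+\cdots+f_nf_1 .$$
   Context: Two finite sets of integers $E,F$ are nearly disjoint if for every $i\in E\cap F$ one of the following holds: (a) $i=\min(E)$, $|E|>1$ and $i\neq\min(F)$; or (b) $i=\min(F)$, $|F|>1$ and $i\neq \min(E)$. A linked partition of $[n]$ is a set $\pi$ of nonempty subsets of $[n]$ (called blocks) whose union is $[n]$ and such that any two distinct blocks are nearly disjoint. Two blocks $B,B'$ are crossing if there are $a,c\in B$ and $b,d\in B'$ with $a<b<c<d$. A linked partition is noncrossing if no two distinct blocks are crossing. *)

theory Defs
  imports Main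
begin

definition nearly_disjoint :: "int set \<Rightarrow> int set \<Rightarrow> bool" where
  "nearly_disjoint E F \<longleftrightarrow>
     (\<forall>i\<in>E \<inter> F.
        (i = Min E \<and> card E > 1 \<and> i \<noteq> Min F) \<or>
        (i = Min F \<and> card F > 1 \<and> i \<noteq> Min E))"

definition linked_partition :: "nat \<Rightarrow> int set set \<Rightarrow> bool" where
  "linked_partition n \<pi> \<longleftrightarrow>
     (\<forall>B\<in>\<pi>. B \<noteq> {} \<and> B \<subseteq> {1..int n}) \<and>
     \<Union>\<pi> = {1..int n} \<and>
     (\<forall>B\<in>\<pi>. \<forall>B'\<in>\<pi>. B \<noteq> B' \<longrightarrow> nearly_disjoint B B')"

definition crossing :: "int set \<Rightarrow> int set \<Rightarrow> bool" where
  "crossing B B' \<longleftrightarrow>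
     (\<exists>a\<in>B. \<exists>c\<in>B. \<exists>b\<in>B'. \<exists>d\<in>B'. a < b \<and> b < c \<and> c < d)"

definition noncrossing_linked_partition :: "nat \<Rightarrow> int set set \<Rightarrow> bool" where
  "noncrossing_linked_partition n \<pi> \<longleftrightarrow>
     linked_partition n \<pi> \<and>
     (\<forall>B\<in>\<pi>. \<forall>B'\<in>\<pi>. B \<noteq> B' \<longrightarrow> \<not> crossing B B')"

definition ncl_count :: "nat \<Rightarrow> nat" where
  "ncl_count n = card {\<pi>. noncrossing_linked_partition n \<pi>}"

end

theory Submission
  imports Defs
begin

text \<open>Classify a noncrossing linked partition of \<open>[n + 1]\<close> by the largest element \<open>b\<close> of the
  block \<open>B\<close> containing 1 (this block is unique, as two blocks cannot share their minimum).
  If \<open>b = 1\<close> then \<open>B = {1}\<close>, and removing it leaves a partition of \<open>[2, n + 1]\<close>. If \<open>b > 1\<close>,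
  no block crosses \<open>B\<close>, so every block lies in \<open>[1, b]\<close> or in \<open>[b, n + 1]\<close>, and the partition
  splits into one of \<open>[1, b]\<close> in which 1 and \<open>b\<close> share a block and one of \<open>[b, n + 1]\<close>.
  Deleting \<open>b\<close> from the block of 1 identifies the former with the partitions of \<open>[1, b - 1]\<close>.
  As the count depends only on the length of the interval, the term for \<open>b\<close> is
  \<open>f (b - 1) * f (n + 2 - b)\<close>.\<close>

lemma nearly_disjoint_sym: "nearly_disjoint E F \<longleftrightarrow> nearly_disjoint F E"
  unfolding nearly_disjoint_def by blast

lemma nearly_disjoint_if_disjoint: "E \<inter> F = {} \<Longrightarrow> nearly_disjoint E F"
  unfolding nearly_disjoint_def by blast

lemma nearly_disjoint_singleton: "nearly_disjoint {x} F \<Longrightarrow> x \<notin> F"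
  unfolding nearly_disjoint_def by auto

lemma nearly_disjoint_common_element:
  assumes "nearly_disjoint E F" "x \<in> E" "x \<in> F"
  shows "Min E \<noteq> Min F \<and> (x = Min E \<and> card E > 1 \<or> x = Min F \<and> card F > 1)"
proof -
  have "x \<in> E \<inter> F" using assms(2,3) by blast
  then have "x = Min E \<and> card E > 1 \<and> x \<noteq> Min F \<or> x = Min F \<and> card F > 1 \<and> x \<noteq> Min E"
    using assms(1) unfolding nearly_disjoint_def by blast
  then show ?thesis by auto
qed

lemma nearly_disjoint_if_Min_outside:
  assumes "nearly_disjoint E F" "E' \<inter> F \<subseteq> E \<inter> F" "Min E' = Min E" "Min E \<notin> F"
  shows "nearly_disjoint E' F"
  unfolding nearly_disjoint_def
proof
  fix i assume "i \<in> E' \<inter> F"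
  then have "i \<in> E \<inter> F" "i \<noteq> Min E" using assms(2,4) by blast+
  then show "i = Min E' \<and> card E' > 1 \<and> i \<noteq> Min F \<or> i = Min F \<and> card F > 1 \<and> i \<noteq> Min E'"
    using assms(1,3) unfolding nearly_disjoint_def by auto
qed

lemma crossing_mono: "crossing B D \<Longrightarrow> B \<subseteq> B' \<Longrightarrow> D \<subseteq> D' \<Longrightarrow> crossing B' D'"
  unfolding crossing_def by blast

lemma not_crossing_singleton: "\<not> crossing {x} D" "\<not> crossing D {x}"
  unfolding crossing_def by auto

lemma not_crossing_if_separated:
  assumes "\<forall>x\<in>D. x \<le> b" "\<forall>y\<in>E. b \<le> y"
  shows "\<not> crossing D E" "\<not> crossing E D"
  unfolding crossing_def
proof safe
  fix a c y d assume "a \<in> D" "c \<in> D" "y \<in> E" "d \<in> E" "a < y" "y < c" "c < d"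
  then show False using assms by force
next
  fix a c y d assume "a \<in> E" "c \<in> E" "y \<in> D" "d \<in> D" "a < y" "y < c" "c < d"
  then show False using assms by force
qed

lemma nearly_disjoint_image:
  fixes f :: "int \<Rightarrow> int"
  assumes f: "strict_mono f" and EF: "finite E" "finite F" "E \<noteq> {}" "F \<noteq> {}"
    and "nearly_disjoint E F"
  shows "nearly_disjoint (f ` E) (f ` F)"
proof -
  have "inj f" using f strict_mono_imp_inj_on by blast
  moreover have "Min (f ` E) = f (Min E)" "Min (f ` F) = f (Min F)"
    using EF f by (simp_all add: mono_Min_commute strict_mono_mono)
  ultimately show ?thesis
    using assms(6) unfolding nearly_disjoint_def
    by (auto simp: card_image inj_eq inj_on_subset)
qed

lemma crossing_image:
  fixes f :: "int \<Rightarrow> int"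
  assumes "strict_mono f"
  shows "crossing (f ` B) (f ` D) \<longleftrightarrow> crossing B D"
  using assms unfolding crossing_def by (auto simp: strict_mono_less)

lemma not_crossing_insert_greater:
  assumes "\<not> crossing A D" "\<not> crossing D A" "lo \<in> A" and D: "\<forall>x\<in>D. lo < x \<and> x < m"
  shows "\<not> crossing (insert m A) D \<and> \<not> crossing D (insert m A)"
proof safe
  assume "crossing (insert m A) D"
  then obtain a c y d where "a \<in> insert m A" "c \<in> insert m A" "y \<in> D" "d \<in> D" "a < y" "y < c" "c < d"
    unfolding crossing_def by blast
  moreover have "d < m" using D \<open>d \<in> D\<close> by blast
  ultimately have "crossing A D" unfolding crossing_def by auto
  then show False using assms(1) by blast
next
  assume "crossing D (insert m A)"
  then obtain a c y d where h: "a \<in> D" "c \<in> D" "y \<in> insert m A" "d \<in> insert m A" "a < y" "y < c" "c < d"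
    unfolding crossing_def by blast
  have "y \<in> A" using h D by fastforce
  show False
  proof (cases "d \<in> A")
    case True
    then have "crossing D A" unfolding crossing_def using h \<open>y \<in> A\<close> by blast
    then show False using assms(2) by blast
  next
    case False
    have "lo < a" using D h(1) by blast
    then have "crossing A D" unfolding crossing_def using h \<open>y \<in> A\<close> \<open>lo \<in> A\<close> by blast
    then show False using assms(1) by blast
  qed
qed

subsection \<open>Noncrossing linked partitions of a set of integers\<close>

definition nc_compatible :: "int set \<Rightarrow> int set \<Rightarrow> bool" where
  "nc_compatible B D \<longleftrightarrow> nearly_disjoint B D \<and> \<not> crossing B D"

definition ncl_partition :: "int set \<Rightarrow> int set set \<Rightarrow> bool" where
  "ncl_partition S P \<longleftrightarrow> {} \<notin> P \<and> \<Union>P = S \<and> pairwise nc_compatible P"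

lemma noncrossing_linked_partition_iff:
  "noncrossing_linked_partition n P \<longleftrightarrow> ncl_partition {1..int n} P"
  unfolding noncrossing_linked_partition_def linked_partition_def ncl_partition_def
    nc_compatible_def pairwise_def
  by auto

lemma ncl_count_eq: "ncl_count n = card {P. ncl_partition {1..int n} P}"
  by (simp add: ncl_count_def noncrossing_linked_partition_iff)

lemma ncl_partitionI:
  assumes "{} \<notin> P" "\<Union>P = S"
    and "\<And>B D. B \<in> P \<Longrightarrow> D \<in> P \<Longrightarrow> B \<noteq> D \<Longrightarrow> nearly_disjoint B D \<and> \<not> crossing B D"
  shows "ncl_partition S P"
  using assms unfolding ncl_partition_def nc_compatible_def pairwise_def by blast

lemma ncl_partition_block_nonempty: "ncl_partition S P \<Longrightarrow> B \<in> P \<Longrightarrow> B \<noteq> {}"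
  unfolding ncl_partition_def by blast

lemma ncl_partition_block_subset: "ncl_partition S P \<Longrightarrow> B \<in> P \<Longrightarrow> B \<subseteq> S"
  unfolding ncl_partition_def by blast

lemma ncl_partition_Union: "ncl_partition S P \<Longrightarrow> \<Union>P = S"
  unfolding ncl_partition_def by blast

lemma ncl_partition_compatible:
  "ncl_partition S P \<Longrightarrow> B \<in> P \<Longrightarrow> D \<in> P \<Longrightarrow> B \<noteq> D \<Longrightarrow> nearly_disjoint B D \<and> \<not> crossing B D"
  unfolding ncl_partition_def nc_compatible_def pairwise_def by blast

lemma finite_ncl_partitions: "finite S \<Longrightarrow> finite {P. ncl_partition S P}"
  by (rule finite_subset[of _ "Pow (Pow S)"]) (auto simp: ncl_partition_def)

lemma ncl_partition_subset: "ncl_partition S P \<Longrightarrow> Q \<subseteq> P \<Longrightarrow> ncl_partition (\<Union>Q) Q"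
  unfolding ncl_partition_def using pairwise_subset by blast

lemma ncl_partition_singleton_notin:
  assumes "ncl_partition S P" "B \<in> P" "b \<in> B" "B \<noteq> {b}"
  shows "{b} \<notin> P"
  using assms ncl_partition_compatible nearly_disjoint_singleton by blast

lemma ncl_partition_finite_block: "ncl_partition S P \<Longrightarrow> finite S \<Longrightarrow> B \<in> P \<Longrightarrow> finite B"
  using ncl_partition_block_subset finite_subset by metis

lemma ncl_partition_Min_block_unique:
  assumes P: "ncl_partition S P" "finite S" and B: "B \<in> P" "x \<in> B" and D: "D \<in> P" "x \<in> D"
    and least: "\<forall>y\<in>S. x \<le> y"
  shows "B = D"
proof (rule ccontr)
  assume "B \<noteq> D"
  then have "Min B \<noteq> Min D"
    using ncl_partition_compatible[OF P(1) B(1) D(1)] nearly_disjoint_common_element[OF _ B(2) D(2)]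
    by blast
  moreover have "Min E = x" if "E \<in> P" "x \<in> E" for E
    using that least ncl_partition_block_subset[OF P(1) that(1)]
    by (intro Min_eqI ncl_partition_finite_block[OF P]) auto
  ultimately show False using B D by simp
qed

lemma ncl_partition_Max_block_unique:
  assumes P: "ncl_partition S P" "finite S" and B: "B \<in> P" "x \<in> B" and D: "D \<in> P" "x \<in> D"
    and greatest: "\<forall>y\<in>S. y \<le> x"
  shows "B = D"
proof (rule ccontr)
  \<comment> \<open>a shared element is the minimum of a block with at least two elements, which cannot
    happen for the largest element of \<open>S\<close>\<close>
  have not_card_gt_1: "\<not> card E > 1" if "E \<in> P" "x \<in> E" "x = Min E" for E
  proof -
    have "x \<le> y" if "y \<in> E" for y
      using that \<open>x = Min E\<close> Min_le[OF ncl_partition_finite_block[OF P \<open>E \<in> P\<close>]] by simp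
    then have "E = {x}"
      using \<open>x \<in> E\<close> greatest ncl_partition_block_subset[OF P(1) \<open>E \<in> P\<close>] by force
    then show ?thesis by simp
  qed
  assume "B \<noteq> D"
  then have "x = Min B \<and> card B > 1 \<or> x = Min D \<and> card D > 1"
    using ncl_partition_compatible[OF P(1) B(1) D(1)] nearly_disjoint_common_element[OF _ B(2) D(2)]
    by blast
  then show False using not_card_gt_1 B D by blast
qed

lemma ncl_partition_Min_block:
  assumes "ncl_partition {lo..hi} P" "B \<in> P" "lo \<in> B"
  shows "Min B = lo"
proof (rule Min_eqI)
  show "finite B" by (rule ncl_partition_finite_block[OF assms(1) finite_atLeastAtMost_int assms(2)])
  show "lo \<le> y" if "y \<in> B" for y using that ncl_partition_block_subset[OF assms(1,2)] by auto
qed (rule assms(3))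

lemma ncl_partition_image:
  fixes f :: "int \<Rightarrow> int"
  assumes f: "strict_mono f" and P: "ncl_partition S P" "finite S"
  shows "ncl_partition (f ` S) ((`) f ` P)"
proof (rule ncl_partitionI)
  show "{} \<notin> (`) f ` P" "\<Union>((`) f ` P) = f ` S"
    using ncl_partition_block_nonempty[OF P(1)] ncl_partition_Union[OF P(1)] by auto
  fix B' D' assume "B' \<in> (`) f ` P" "D' \<in> (`) f ` P" "B' \<noteq> D'"
  then obtain B D where "B \<in> P" "D \<in> P" "B \<noteq> D" "B' = f ` B" "D' = f ` D" by blast
  then show "nearly_disjoint B' D' \<and> \<not> crossing B' D'"
    using nearly_disjoint_image[OF f] crossing_image[OF f] ncl_partition_compatible[OF P(1)]
      ncl_partition_finite_block[OF P] ncl_partition_block_nonempty[OF P(1)] by metis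
qed

lemma card_ncl_partitions_interval:
  assumes "lo \<le> hi + 1"
  shows "card {P. ncl_partition {lo..hi} P} = ncl_count (nat (hi - lo + 1))"
proof -
  define c where "c = 1 - lo"
  have shift: "strict_mono ((+) d)" for d :: int by (simp add: strict_mono_def)
  have "bij_betw ((`) ((`) ((+) c))) {P. ncl_partition {lo..hi} P} {P. ncl_partition {1..hi + c} P}"
  proof (rule bij_betw_byWitness[where f' = "(`) ((`) ((+) (- c)))"])
    show "(`) ((`) ((+) c)) ` {P. ncl_partition {lo..hi} P} \<subseteq> {P. ncl_partition {1..hi + c} P}"
    proof clarify
      fix P assume "ncl_partition {lo..hi} P"
      then have "ncl_partition ((+) c ` {lo..hi}) ((`) ((+) c) ` P)"
        by (intro ncl_partition_image[OF shift]) auto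
      then show "ncl_partition {1..hi + c} ((`) ((+) c) ` P)" by (simp add: c_def)
    qed
    show "(`) ((`) ((+) (- c))) ` {P. ncl_partition {1..hi + c} P} \<subseteq> {P. ncl_partition {lo..hi} P}"
    proof clarify
      fix P assume "ncl_partition {1..hi + c} P"
      then have "ncl_partition ((+) (- c) ` {1..hi + c}) ((`) ((+) (- c)) ` P)"
        by (intro ncl_partition_image[OF shift]) auto
      then show "ncl_partition {lo..hi} ((`) ((+) (- c)) ` P)" by (simp add: c_def)
    qed
  qed (simp_all add: image_image)
  moreover have "hi + c = int (nat (hi - lo + 1))" using assms by (simp add: c_def)
  ultimately show ?thesis by (metis bij_betw_same_card ncl_count_eq)
qed

subsection \<open>Singleton blocks and joining the endpoints of an interval\<close>

lemma ncl_partition_insert_singleton: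
  assumes Q: "ncl_partition S Q" and "x \<notin> S"
  shows "ncl_partition (insert x S) (insert {x} Q)"
proof (rule ncl_partitionI)
  show "{} \<notin> insert {x} Q" "\<Union>(insert {x} Q) = insert x S"
    using ncl_partition_block_nonempty[OF Q] ncl_partition_Union[OF Q] by auto
  have "{x} \<inter> D = {}" if "D \<in> Q" for D
    using that \<open>x \<notin> S\<close> ncl_partition_block_subset[OF Q] by blast
  then show "nearly_disjoint B D \<and> \<not> crossing B D"
    if "B \<in> insert {x} Q" "D \<in> insert {x} Q" "B \<noteq> D" for B D
    using that ncl_partition_compatible[OF Q] nearly_disjoint_if_disjoint not_crossing_singleton
    by (metis inf_commute insertE)
qed

lemma ncl_partition_remove_singleton:
  assumes P: "ncl_partition S P" and "{x} \<in> P"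
  shows "ncl_partition (S - {x}) (P - {{x}})"
proof (rule ncl_partitionI)
  have "x \<notin> D" if "D \<in> P" "D \<noteq> {x}" for D
    using that assms ncl_partition_compatible nearly_disjoint_singleton by blast
  then show "\<Union>(P - {{x}}) = S - {x}"
    using ncl_partition_Union[OF P] by blast
qed (use ncl_partition_block_nonempty[OF P] ncl_partition_compatible[OF P] in auto)

lemma card_ncl_partitions_with_singleton:
  assumes "x \<notin> S"
  shows "card {P. ncl_partition (insert x S) P \<and> {x} \<in> P} = card {P. ncl_partition S P}"
proof (rule bij_betw_same_card[of "\<lambda>P. P - {{x}}"], rule bij_betw_byWitness[where f' = "insert {x}"])
  show "\<forall>Q\<in>{P. ncl_partition S P}. insert {x} Q - {{x}} = Q"
    using assms ncl_partition_block_subset by blast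
  show "(\<lambda>P. P - {{x}}) ` {P. ncl_partition (insert x S) P \<and> {x} \<in> P} \<subseteq> {P. ncl_partition S P}"
    using ncl_partition_remove_singleton assms by fastforce
  show "insert {x} ` {P. ncl_partition S P} \<subseteq> {P. ncl_partition (insert x S) P \<and> {x} \<in> P}"
    using ncl_partition_insert_singleton assms by blast
qed auto

lemma ncl_partition_replace_block:
  assumes P: "ncl_partition S P" and "B \<in> P" "B' \<noteq> {}"
    and compatible: "\<And>D. D \<in> P \<Longrightarrow> D \<noteq> B \<Longrightarrow> nc_compatible B' D \<and> nc_compatible D B'"
  shows "ncl_partition (B' \<union> \<Union>(P - {B})) (insert B' (P - {B}))"
proof -
  have "pairwise nc_compatible (P - {B})"
    using P pairwise_subset unfolding ncl_partition_def by blast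
  then show ?thesis
    using P compatible \<open>B' \<noteq> {}\<close> unfolding ncl_partition_def pairwise_insert by blast
qed

lemma ncl_partition_remove_Max:
  assumes P: "ncl_partition {lo..b} P" and B: "B \<in> P" "lo \<in> B" "b \<in> B" and "lo < b"
  shows "ncl_partition {lo..b - 1} ((\<lambda>D. D - {b}) ` P)"
proof -
  have fin: "finite {lo..b}" by simp
  have lo_other: "lo \<notin> D" if "D \<in> P" "D \<noteq> B" for D
    using ncl_partition_Min_block_unique[OF P fin B(1,2) that(1)] that(2) by auto
  have b_other: "b \<notin> D" if "D \<in> P" "D \<noteq> B" for D
    using ncl_partition_Max_block_unique[OF P fin B(1,3) that(1)] that(2) by auto
  have "(\<lambda>D. D - {b}) ` P = insert (B - {b}) (P - {B})"
  proof -
    have "(\<lambda>D. D - {b}) ` P = (\<lambda>D. D - {b}) ` insert B (P - {B})" using B(1) by (simp add: insert_absorb)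
    also have "\<dots> = insert (B - {b}) ((\<lambda>D. D - {b}) ` (P - {B}))" by (simp only: image_insert)
    also have "(\<lambda>D. D - {b}) ` (P - {B}) = P - {B}"
      using b_other by force
    finally show ?thesis .
  qed
  moreover have "ncl_partition ((B - {b}) \<union> \<Union>(P - {B})) (insert (B - {b}) (P - {B}))"
  proof (rule ncl_partition_replace_block[OF P B(1)])
    show "B - {b} \<noteq> {}" using B \<open>lo < b\<close> by blast
    have "Min (B - {b}) = lo"
      using B(2) \<open>lo < b\<close> ncl_partition_block_subset[OF P B(1)]
        ncl_partition_finite_block[OF P fin B(1)] by (intro Min_eqI) auto
    then have same_Min: "Min (B - {b}) = Min B"
      using ncl_partition_Min_block[OF P B(1,2)] by simp
    fix D assume D: "D \<in> P" "D \<noteq> B"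
    then have "nearly_disjoint B D \<and> \<not> crossing B D \<and> \<not> crossing D B"
      using ncl_partition_compatible[OF P] B(1) by blast
    moreover have "nearly_disjoint (B - {b}) D" if "nearly_disjoint B D"
      using nearly_disjoint_if_Min_outside[OF that _ same_Min] lo_other[OF D]
        ncl_partition_Min_block[OF P B(1,2)] by blast
    ultimately show "nc_compatible (B - {b}) D \<and> nc_compatible D (B - {b})"
      unfolding nc_compatible_def using nearly_disjoint_sym crossing_mono[of _ _ B] crossing_mono[of _ _ _ B]
      by blast
  qed
  moreover have "(B - {b}) \<union> \<Union>(P - {B}) = {lo..b - 1}"
  proof -
    have "(B - {b}) \<union> \<Union>(P - {B}) = \<Union>P - {b}" using b_other B(1) by blast
    then show ?thesis using ncl_partition_Union[OF P] by auto
  qed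
  ultimately show ?thesis by simp
qed

lemma ncl_partition_insert_Max:
  assumes Q: "ncl_partition {lo..b - 1} Q" and "lo < b"
  defines "join \<equiv> \<lambda>D. if lo \<in> D then insert b D else D"
  shows "ncl_partition {lo..b} (join ` Q) \<and> (\<exists>B\<in>join ` Q. lo \<in> B \<and> b \<in> B)"
proof -
  have fin: "finite {lo..b - 1}" by simp
  obtain B where B: "B \<in> Q" "lo \<in> B"
    using ncl_partition_Union[OF Q] \<open>lo < b\<close> by (metis Union_iff atLeastAtMost_iff order_refl zle_diff1_eq)
  have lo_other: "lo \<notin> D" if "D \<in> Q" "D \<noteq> B" for D
    using ncl_partition_Min_block_unique[OF Q fin B(1,2) that(1)] that(2) by auto
  have between: "\<forall>x\<in>D. lo < x \<and> x < b" if "D \<in> Q" "D \<noteq> B" for D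
  proof
    fix x assume "x \<in> D"
    then have "x \<in> {lo..b - 1}" "x \<noteq> lo" using ncl_partition_block_subset[OF Q that(1)] lo_other[OF that] by auto
    then show "lo < x \<and> x < b" by auto
  qed
  have "join ` Q = join ` insert B (Q - {B})" using B(1) by (simp add: insert_absorb)
  also have "\<dots> = insert (insert b B) (Q - {B})"
    using B(2) lo_other by (force simp: join_def)
  finally have join_Q: "join ` Q = insert (insert b B) (Q - {B})" .
  have "ncl_partition (insert b B \<union> \<Union>(Q - {B})) (insert (insert b B) (Q - {B}))"
  proof (rule ncl_partition_replace_block[OF Q B(1)])
    have same_Min: "Min (insert b B) = Min B"
      using ncl_partition_Min_block[OF Q B] ncl_partition_finite_block[OF Q fin B(1)] B(2) \<open>lo < b\<close>
      by (subst Min_insert) auto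
    fix D assume D: "D \<in> Q" "D \<noteq> B"
    then have "nearly_disjoint B D \<and> \<not> crossing B D \<and> \<not> crossing D B"
      using ncl_partition_compatible[OF Q] B(1) by blast
    moreover have "nearly_disjoint (insert b B) D" if "nearly_disjoint B D"
      using nearly_disjoint_if_Min_outside[OF that _ same_Min] lo_other[OF D] between[OF D]
        ncl_partition_Min_block[OF Q B] by blast
    ultimately show "nc_compatible (insert b B) D \<and> nc_compatible D (insert b B)"
      unfolding nc_compatible_def using nearly_disjoint_sym not_crossing_insert_greater[OF _ _ B(2) between[OF D]]
      by blast
  qed simp
  moreover have "insert b B \<union> \<Union>(Q - {B}) = {lo..b}"
  proof -
    have "insert b B \<union> \<Union>(Q - {B}) = insert b (\<Union>Q)" using B(1) by blast
    then show ?thesis using ncl_partition_Union[OF Q] \<open>lo < b\<close> by auto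
  qed
  ultimately show ?thesis using join_Q B(2) by auto
qed

lemma card_ncl_partitions_joining_ends:
  assumes "lo < b"
  shows "card {P. ncl_partition {lo..b} P \<and> (\<exists>B\<in>P. lo \<in> B \<and> b \<in> B)}
       = card {Q. ncl_partition {lo..b - 1} Q}"
proof -
  define join where "join = (\<lambda>D. if lo \<in> D then insert b D else D)"
  have fin: "finite {lo..b}" by simp
  have "bij_betw ((`) (\<lambda>D. D - {b})) {P. ncl_partition {lo..b} P \<and> (\<exists>B\<in>P. lo \<in> B \<and> b \<in> B)}
          {Q. ncl_partition {lo..b - 1} Q}"
  proof (rule bij_betw_byWitness[where f' = "(`) join"])
    show "\<forall>P\<in>{P. ncl_partition {lo..b} P \<and> (\<exists>B\<in>P. lo \<in> B \<and> b \<in> B)}. join ` (\<lambda>D. D - {b}) ` P = P"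
    proof clarify
      fix P B assume P: "ncl_partition {lo..b} P" and B: "B \<in> P" "lo \<in> B" "b \<in> B"
      have "join (D - {b}) = D" if "D \<in> P" for D
      proof (cases "D = B")
        case True
        then show ?thesis using B(2,3) \<open>lo < b\<close> by (auto simp: join_def)
      next
        case False
        then have "lo \<notin> D" "b \<notin> D"
          using ncl_partition_Min_block_unique[OF P fin B(1,2) that] ncl_partition_Max_block_unique[OF P fin B(1,3) that]
          by auto
        then show ?thesis by (simp add: join_def)
      qed
      then show "join ` (\<lambda>D. D - {b}) ` P = P" by (simp add: image_image cong: image_cong)
    qed
    show "\<forall>Q\<in>{Q. ncl_partition {lo..b - 1} Q}. (\<lambda>D. D - {b}) ` join ` Q = Q"
    proof clarify
      fix Q assume Q: "ncl_partition {lo..b - 1} Q"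
      have "join D - {b} = D" if "D \<in> Q" for D
        using ncl_partition_block_subset[OF Q that] by (auto simp: join_def)
      then show "(\<lambda>D. D - {b}) ` join ` Q = Q" by (simp add: image_image cong: image_cong)
    qed
    show "(`) (\<lambda>D. D - {b}) ` {P. ncl_partition {lo..b} P \<and> (\<exists>B\<in>P. lo \<in> B \<and> b \<in> B)}
        \<subseteq> {Q. ncl_partition {lo..b - 1} Q}"
      using ncl_partition_remove_Max \<open>lo < b\<close> by blast
    show "(`) join ` {Q. ncl_partition {lo..b - 1} Q}
        \<subseteq> {P. ncl_partition {lo..b} P \<and> (\<exists>B\<in>P. lo \<in> B \<and> b \<in> B)}"
      using ncl_partition_insert_Max[of lo b] \<open>lo < b\<close> unfolding join_def by blast
  qed
  then show ?thesis by (rule bij_betw_same_card)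
qed

definition left_blocks :: "int \<Rightarrow> int set set \<Rightarrow> int set set" where
  "left_blocks b P = {D \<in> P. D \<subseteq> {..b}}"

subsection \<open>Splitting at the largest element of the first block\<close>

text \<open>The point \<open>b\<close> belongs to the block of \<open>lo\<close> on the left. On the right it is the minimum of
  the block containing it, or, if no right block contains it, it is covered by an extra singleton
  \<open>{b}\<close>, which \<open>glue_at\<close> discards again.\<close>

definition right_blocks :: "int \<Rightarrow> int set set \<Rightarrow> int set set" where
  "right_blocks b P =
     (let R = {D \<in> P. D \<subseteq> {b..}} in if b \<in> \<Union>R then R else insert {b} R)"

definition glue_at :: "int \<Rightarrow> int set set \<Rightarrow> int set set \<Rightarrow> int set set" where
  "glue_at b L R = L \<union> (R - {{b}})"

lemma ncl_partition_Max_block: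
  assumes P: "ncl_partition {lo..hi} P" and B: "B \<in> P" "Max B = b"
  shows "b \<in> B" "B \<subseteq> {..b}" "b \<le> hi"
proof -
  have "finite B" "B \<noteq> {}"
    using ncl_partition_finite_block[OF P _ B(1)] ncl_partition_block_nonempty[OF P B(1)] by auto
  then show "b \<in> B" "B \<subseteq> {..b}" using B(2) Max_in Max_ge by auto
  then show "b \<le> hi" using ncl_partition_block_subset[OF P B(1)] by auto
qed

lemma ncl_partition_blocks_separated:
  assumes P: "ncl_partition {lo..hi} P" and B: "B \<in> P" "lo \<in> B" "Max B = b" and D: "D \<in> P"
  shows "D \<subseteq> {..b} \<or> D \<subseteq> {b..}"
proof (rule ccontr)
  have fin: "finite {lo..hi}" by simp
  assume "\<not> (D \<subseteq> {..b} \<or> D \<subseteq> {b..})"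
  then obtain x y where xy: "x \<in> D" "b < x" "y \<in> D" "y < b" by force
  have "D \<noteq> B" using xy ncl_partition_Max_block(2)[OF P B(1,3)] by auto
  then have "lo \<notin> D" using ncl_partition_Min_block_unique[OF P fin B(1,2) D] by auto
  moreover have "y \<in> {lo..hi}" using xy(3) ncl_partition_block_subset[OF P D] by blast
  ultimately have "lo < y" using xy(3) by (cases "y = lo") auto
  then have "crossing B D"
    unfolding crossing_def using xy B(2) ncl_partition_Max_block(1)[OF P B(1,3)] by blast
  then show False using ncl_partition_compatible[OF P B(1) D \<open>D \<noteq> B\<close>[symmetric]] by blast
qed

lemma ncl_partition_left_blocks:
  assumes P: "ncl_partition {lo..hi} P" and B: "B \<in> P" "lo \<in> B" "Max B = b"
  shows "ncl_partition {lo..b} (left_blocks b P) \<and> B \<in> left_blocks b P"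
proof -
  note B_facts = ncl_partition_Max_block[OF P B(1,3)]
  have "B \<in> left_blocks b P" using B(1) B_facts unfolding left_blocks_def by blast
  moreover have "\<Union>(left_blocks b P) = {lo..b}"
  proof
    show "\<Union>(left_blocks b P) \<subseteq> {lo..b}"
      using ncl_partition_block_subset[OF P] unfolding left_blocks_def by fastforce
    show "{lo..b} \<subseteq> \<Union>(left_blocks b P)"
    proof
      fix z assume z: "z \<in> {lo..b}"
      then obtain D where D: "D \<in> P" "z \<in> D" using ncl_partition_Union[OF P] B_facts(3) by fastforce
      show "z \<in> \<Union>(left_blocks b P)"
      proof (cases "D \<subseteq> {..b}")
        case True
        then show ?thesis using D unfolding left_blocks_def by blast
      next
        case False
        then have "z = b" using ncl_partition_blocks_separated[OF P B D(1)] z D(2) by fastforce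
        then show ?thesis using \<open>B \<in> left_blocks b P\<close> B_facts(1) by blast
      qed
    qed
  qed
  moreover have "ncl_partition (\<Union>(left_blocks b P)) (left_blocks b P)"
    by (rule ncl_partition_subset[OF P]) (auto simp: left_blocks_def)
  ultimately show ?thesis by simp
qed

lemma ncl_partition_right_blocks:
  assumes P: "ncl_partition {lo..hi} P" and B: "B \<in> P" "lo \<in> B" "Max B = b"
  shows "ncl_partition {b..hi} (right_blocks b P)"
proof -
  note B_facts = ncl_partition_Max_block[OF P B(1,3)]
  define R where "R = {D \<in> P. D \<subseteq> {b..}}"
  have right: "right_blocks b P = (if b \<in> \<Union>R then R else insert {b} R)"
    unfolding right_blocks_def R_def Let_def ..
  have R: "ncl_partition (\<Union>R) R"
    by (rule ncl_partition_subset[OF P]) (auto simp: R_def)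
  have "\<Union>R \<subseteq> {b..hi}"
    using ncl_partition_block_subset[OF P] unfolding R_def by fastforce
  moreover have "{b..hi} - {b} \<subseteq> \<Union>R"
  proof
    fix z assume z: "z \<in> {b..hi} - {b}"
    then have "z \<in> {lo..hi}" using B_facts(1) ncl_partition_block_subset[OF P B(1)] by auto
    then obtain D where D: "D \<in> P" "z \<in> D" using ncl_partition_Union[OF P] by blast
    then have "D \<subseteq> {b..}" using ncl_partition_blocks_separated[OF P B D(1)] z by auto
    then show "z \<in> \<Union>R" using D unfolding R_def by blast
  qed
  moreover have "b \<in> {b..hi}" using B_facts(3) by simp
  ultimately have R_b: "insert b (\<Union>R) = {b..hi}" by auto
  show ?thesis
  proof (cases "b \<in> \<Union>R")
    case True
    then have "right_blocks b P = R" "\<Union>R = {b..hi}" using right R_b by auto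
    then show ?thesis using R by simp
  next
    case False
    then have "right_blocks b P = insert {b} R" using right by simp
    then show ?thesis using ncl_partition_insert_singleton[OF R False] R_b by simp
  qed
qed

lemma ncl_partitions_compatible_across:
  assumes L: "ncl_partition {lo..b} L" and B: "B \<in> L" "lo \<in> B" "b \<in> B" and "lo < b"
    and R: "ncl_partition {b..hi} R" and D: "D \<in> L" and E: "E \<in> R" "E \<noteq> {b}"
  shows "nearly_disjoint D E \<and> \<not> crossing D E \<and> \<not> crossing E D"
proof -
  have D_sub: "D \<subseteq> {lo..b}" and E_sub: "E \<subseteq> {b..hi}"
    using ncl_partition_block_subset[OF L D] ncl_partition_block_subset[OF R E(1)] .
  have DE: "D \<inter> E \<subseteq> {b}"
  proof
    fix x assume "x \<in> D \<inter> E"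
    then have "x \<le> b" "b \<le> x" using D_sub E_sub by auto
    then show "x \<in> {b}" by simp
  qed
  have "nearly_disjoint D E"
  proof (cases "b \<in> D \<inter> E")
    case True
    then have "D = B"
      using ncl_partition_Max_block_unique[OF L finite_atLeastAtMost_int D _ B(1,3)] by auto
    have "Min E = b" using ncl_partition_Min_block[OF R E(1)] True by blast
    moreover have "card E > 1"
    proof (rule ccontr)
      assume "\<not> card E > 1"
      moreover have "finite E" using ncl_partition_finite_block[OF R _ E(1)] by simp
      ultimately have "\<forall>x\<in>E. \<forall>y\<in>E. x = y" using card_le_Suc0_iff_eq by fastforce
      then have "E = {b}" using True by blast
      with E(2) show False by simp
    qed
    moreover have "Min D = lo" using ncl_partition_Min_block[OF L B(1,2)] \<open>D = B\<close> by simp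
    moreover have "D \<inter> E = {b}" using True DE by blast
    ultimately show ?thesis using \<open>lo < b\<close> unfolding nearly_disjoint_def by auto
  next
    case False
    then have "D \<inter> E = {}" using DE by blast
    then show ?thesis by (rule nearly_disjoint_if_disjoint)
  qed
  moreover have "\<forall>x\<in>D. x \<le> b" "\<forall>y\<in>E. b \<le> y" using D_sub E_sub by auto
  ultimately show ?thesis using not_crossing_if_separated by blast
qed

lemma ncl_partition_glue_at:
  assumes L: "ncl_partition {lo..b} L" and B: "B \<in> L" "lo \<in> B" "b \<in> B" and "lo < b"
    and R: "ncl_partition {b..hi} R" and "b \<le> hi"
  shows "ncl_partition {lo..hi} (glue_at b L R) \<and> B \<in> glue_at b L R \<and> Max B = b"
proof -
  have finL: "finite {lo..b}" by simp
  note left_right_compatible = ncl_partitions_compatible_across[OF L B \<open>lo < b\<close> R]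
  have "ncl_partition {lo..hi} (L \<union> (R - {{b}}))"
  proof (rule ncl_partitionI)
    show "{} \<notin> L \<union> (R - {{b}})"
      using ncl_partition_block_nonempty[OF L] ncl_partition_block_nonempty[OF R] by blast
    have right_sub: "\<Union>(R - {{b}}) \<subseteq> {b..hi}" and right_cover: "{b..hi} - {b} \<subseteq> \<Union>(R - {{b}})"
      using ncl_partition_Union[OF R] by blast+
    have "\<Union>(L \<union> (R - {{b}})) = {lo..b} \<union> \<Union>(R - {{b}})"
      using ncl_partition_Union[OF L] by simp
    also have "\<dots> = {lo..hi}"
    proof
      have "{lo..b} \<union> {b..hi} = {lo..hi}" using \<open>lo < b\<close> \<open>b \<le> hi\<close> by auto
      then show "{lo..b} \<union> \<Union>(R - {{b}}) \<subseteq> {lo..hi}" using right_sub by blast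
      have "{lo..b} \<union> ({b..hi} - {b}) = {lo..hi}" using \<open>lo < b\<close> \<open>b \<le> hi\<close> by auto
      then show "{lo..hi} \<subseteq> {lo..b} \<union> \<Union>(R - {{b}})" using right_cover by blast
    qed
    finally show "\<Union>(L \<union> (R - {{b}})) = {lo..hi}" .
    fix D E assume D: "D \<in> L \<union> (R - {{b}})" and E: "E \<in> L \<union> (R - {{b}})" and "D \<noteq> E"
    then consider "D \<in> L" "E \<in> L" | "D \<in> R" "E \<in> R" | "D \<in> L" "E \<in> R" "E \<noteq> {b}"
      | "E \<in> L" "D \<in> R" "D \<noteq> {b}"
      by blast
    then show "nearly_disjoint D E \<and> \<not> crossing D E"
    proof cases
      case 3
      then show ?thesis using left_right_compatible by blast
    next
      case 4
      then show ?thesis using left_right_compatible[of E D] nearly_disjoint_sym by blast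
    qed (use \<open>D \<noteq> E\<close> ncl_partition_compatible[OF L] ncl_partition_compatible[OF R] in blast)+
  qed
  moreover have "Max B = b"
    using B(3) ncl_partition_block_subset[OF L B(1)] ncl_partition_finite_block[OF L finL B(1)]
    by (intro Max_eqI) auto
  ultimately show ?thesis using B(1) unfolding glue_at_def by blast
qed

lemma glue_at_split:
  assumes P: "ncl_partition {lo..hi} P" and B: "B \<in> P" "lo \<in> B" "Max B = b" and "lo < b"
  shows "glue_at b (left_blocks b P) (right_blocks b P) = P"
proof -
  have "B \<noteq> {b}" using B(2) \<open>lo < b\<close> by auto
  then have "{b} \<notin> P" using ncl_partition_singleton_notin[OF P B(1) ncl_partition_Max_block(1)[OF P B(1,3)]] by blast
  then have "right_blocks b P - {{b}} = {D \<in> P. D \<subseteq> {b..}}"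
    unfolding right_blocks_def Let_def by auto
  then show ?thesis
    unfolding glue_at_def left_blocks_def using ncl_partition_blocks_separated[OF P B] by blast
qed

lemma split_glue_at:
  assumes L: "ncl_partition {lo..b} L" and B: "B \<in> L" "lo \<in> B" "b \<in> B" and "lo < b"
    and R: "ncl_partition {b..hi} R" and "b \<le> hi"
  shows "left_blocks b (glue_at b L R) = L \<and> right_blocks b (glue_at b L R) = R"
proof -
  have "B \<noteq> {b}" using B(2) \<open>lo < b\<close> by auto
  then have "{b} \<notin> L" using ncl_partition_singleton_notin[OF L B(1,3)] by blast
  have only_b: "D = {b}" if "D \<subseteq> {..b}" "D \<subseteq> {b..}" "D \<noteq> {}" for D
    using that by fastforce
  have "left_blocks b (glue_at b L R) = L"
    unfolding left_blocks_def glue_at_def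
    using ncl_partition_block_subset[OF L] ncl_partition_block_subset[OF R]
      ncl_partition_block_nonempty[OF R] only_b by fastforce
  moreover have right_part: "{D \<in> glue_at b L R. D \<subseteq> {b..}} = R - {{b}}"
  proof -
    have "\<not> D \<subseteq> {b..}" if "D \<in> L" for D
    proof
      assume "D \<subseteq> {b..}"
      moreover have "D \<subseteq> {..b}" using ncl_partition_block_subset[OF L that] by auto
      ultimately have "D = {b}" using only_b ncl_partition_block_nonempty[OF L that] by blast
      then show False using that \<open>{b} \<notin> L\<close> by simp
    qed
    moreover have "D \<subseteq> {b..}" if "D \<in> R" for D using ncl_partition_block_subset[OF R that] by auto
    ultimately show ?thesis unfolding glue_at_def by blast
  qed
  moreover have "right_blocks b (glue_at b L R) = R"
  proof (cases "{b} \<in> R")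
    case True
    then have "b \<notin> \<Union>(R - {{b}})"
      using ncl_partition_compatible[OF R] nearly_disjoint_singleton by blast
    then show ?thesis unfolding right_blocks_def Let_def right_part using True by auto
  next
    case False
    then have "b \<in> \<Union>(R - {{b}})" using ncl_partition_Union[OF R] \<open>b \<le> hi\<close> by auto
    then show ?thesis unfolding right_blocks_def Let_def right_part using False by auto
  qed
  ultimately show ?thesis by blast
qed

lemma card_ncl_partitions_first_block_Max:
  assumes "lo < b" "b \<le> hi"
  shows "card {P. ncl_partition {lo..hi} P \<and> (\<exists>B\<in>P. lo \<in> B \<and> Max B = b)}
       = card {L. ncl_partition {lo..b} L \<and> (\<exists>B\<in>L. lo \<in> B \<and> b \<in> B)} * card {R. ncl_partition {b..hi} R}"
proof -
  let ?P = "{P. ncl_partition {lo..hi} P \<and> (\<exists>B\<in>P. lo \<in> B \<and> Max B = b)}"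
  let ?L = "{L. ncl_partition {lo..b} L \<and> (\<exists>B\<in>L. lo \<in> B \<and> b \<in> B)}"
  let ?R = "{R. ncl_partition {b..hi} R}"
  have "bij_betw (\<lambda>P. (left_blocks b P, right_blocks b P)) ?P (?L \<times> ?R)"
  proof (rule bij_betw_byWitness[where f' = "\<lambda>(L, R). glue_at b L R"])
    show "\<forall>P\<in>?P. (\<lambda>(L, R). glue_at b L R) (left_blocks b P, right_blocks b P) = P"
      using glue_at_split \<open>lo < b\<close> by fastforce
    show "\<forall>LR\<in>?L \<times> ?R. (left_blocks b ((\<lambda>(L, R). glue_at b L R) LR),
        right_blocks b ((\<lambda>(L, R). glue_at b L R) LR)) = LR"
      using split_glue_at assms by fastforce
    show "(\<lambda>P. (left_blocks b P, right_blocks b P)) ` ?P \<subseteq> ?L \<times> ?R"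
    proof
      fix LR assume "LR \<in> (\<lambda>P. (left_blocks b P, right_blocks b P)) ` ?P"
      then obtain P B where LR: "LR = (left_blocks b P, right_blocks b P)"
        and P: "ncl_partition {lo..hi} P" and B: "B \<in> P" "lo \<in> B" "Max B = b"
        by blast
      show "LR \<in> ?L \<times> ?R"
        unfolding LR using ncl_partition_left_blocks[OF P B] ncl_partition_right_blocks[OF P B]
          ncl_partition_Max_block(1)[OF P B(1,3)] B(2) by blast
    qed
    show "(\<lambda>(L, R). glue_at b L R) ` (?L \<times> ?R) \<subseteq> ?P"
    proof
      fix P assume "P \<in> (\<lambda>(L, R). glue_at b L R) ` (?L \<times> ?R)"
      then obtain L R B where P: "P = glue_at b L R" and L: "ncl_partition {lo..b} L"
        and B: "B \<in> L" "lo \<in> B" "b \<in> B" and R: "ncl_partition {b..hi} R"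
        by auto
      show "P \<in> ?P"
        unfolding P using ncl_partition_glue_at[OF L B assms(1) R assms(2)] B(2) by blast
    qed
  qed
  then show ?thesis by (simp add: bij_betw_same_card card_cartesian_product)
qed

lemma card_ncl_partitions_first_block_singleton:
  assumes "lo \<le> hi"
  shows "card {P. ncl_partition {lo..hi} P \<and> (\<exists>B\<in>P. lo \<in> B \<and> Max B = lo)} = ncl_count (nat (hi - lo))"
proof -
  have interval: "{lo..hi} = insert lo {lo + 1..hi}" using assms by auto
  have "(\<exists>B\<in>P. lo \<in> B \<and> Max B = lo) \<longleftrightarrow> {lo} \<in> P" if P: "ncl_partition {lo..hi} P" for P
  proof
    assume "\<exists>B\<in>P. lo \<in> B \<and> Max B = lo"
    then obtain B where B: "B \<in> P" "lo \<in> B" "Max B = lo" by blast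
    then have "B \<subseteq> {..lo}" "B \<subseteq> {lo..hi}"
      using ncl_partition_Max_block[OF P B(1,3)] ncl_partition_block_subset[OF P B(1)] by auto
    then have "B = {lo}" using B(2) by fastforce
    then show "{lo} \<in> P" using B(1) by simp
  qed auto
  then have "{P. ncl_partition {lo..hi} P \<and> (\<exists>B\<in>P. lo \<in> B \<and> Max B = lo)}
           = {P. ncl_partition (insert lo {lo + 1..hi}) P \<and> {lo} \<in> P}"
    unfolding interval by blast
  then have "card {P. ncl_partition {lo..hi} P \<and> (\<exists>B\<in>P. lo \<in> B \<and> Max B = lo)}
           = card {P. ncl_partition {lo + 1..hi} P}"
    using card_ncl_partitions_with_singleton[of lo "{lo + 1..hi}"] by simp
  also have "\<dots> = ncl_count (nat (hi - lo))"
    using card_ncl_partitions_interval[of "lo + 1" hi] assms by simp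
  finally show ?thesis .
qed

lemma card_ncl_partitions_by_first_block_Max:
  assumes "lo \<le> hi"
  shows "card {P. ncl_partition {lo..hi} P}
       = (\<Sum>b\<in>{lo..hi}. card {P. ncl_partition {lo..hi} P \<and> (\<exists>B\<in>P. lo \<in> B \<and> Max B = b)})"
proof -
  define T where "T b = {P. ncl_partition {lo..hi} P \<and> (\<exists>B\<in>P. lo \<in> B \<and> Max B = b)}" for b
  have fin: "finite {lo..hi}" by simp
  have "{P. ncl_partition {lo..hi} P} = (\<Union>b\<in>{lo..hi}. T b)"
  proof (intro set_eqI iffI)
    fix P assume "P \<in> {P. ncl_partition {lo..hi} P}"
    then have P: "ncl_partition {lo..hi} P" by simp
    have "lo \<in> \<Union>P" using ncl_partition_Union[OF P] assms by simp
    then obtain B where B: "B \<in> P" "lo \<in> B" by blast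
    then have "Max B \<in> {lo..hi}"
      using Max_in ncl_partition_finite_block[OF P fin B(1)] ncl_partition_block_subset[OF P B(1)] by blast
    then show "P \<in> (\<Union>b\<in>{lo..hi}. T b)" using P B unfolding T_def by blast
  qed (auto simp: T_def)
  moreover have "T b \<inter> T b' = {}" if "b \<noteq> b'" for b b'
  proof (rule ccontr)
    assume "T b \<inter> T b' \<noteq> {}"
    then obtain P B B' where P: "ncl_partition {lo..hi} P" and B: "B \<in> P" "lo \<in> B" "Max B = b"
      and B': "B' \<in> P" "lo \<in> B'" "Max B' = b'"
      unfolding T_def by blast
    have "B = B'" by (rule ncl_partition_Min_block_unique[OF P fin B(1,2) B'(1,2)]) simp
    then show False using B(3) B'(3) that by simp
  qed
  moreover have "finite (T b)" for b
    using finite_ncl_partitions[OF fin] unfolding T_def by (rule rev_finite_subset) blast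
  ultimately show ?thesis unfolding T_def by (simp add: card_UN_disjoint)
qed

lemma ncl_count_one: "ncl_count 1 = 1"
proof -
  have "ncl_partition {1..1} P \<longleftrightarrow> P = {{1}}" for P
  proof
    assume P: "ncl_partition {1..1} P"
    then have "B = {1}" if "B \<in> P" for B
      using ncl_partition_block_subset[OF P that] ncl_partition_block_nonempty[OF P that] by auto
    moreover have "P \<noteq> {}" using ncl_partition_Union[OF P] by auto
    ultimately show "P = {{1}}" by blast
  qed (auto simp: ncl_partition_def)
  then show ?thesis by (simp add: ncl_count_eq)
qed

lemma ncl_count_Suc:
  "ncl_count (n + 1) = ncl_count n + (\<Sum>k=1..n. ncl_count k * ncl_count (n + 1 - k))"
proof -
  define T where "T b = {P. ncl_partition {1..int n + 1} P \<and> (\<exists>B\<in>P. 1 \<in> B \<and> Max B = b)}" for b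
  have "ncl_count (n + 1) = card {P. ncl_partition {1..int n + 1} P}"
    unfolding ncl_count_eq by (simp add: add.commute)
  also have "\<dots> = (\<Sum>b\<in>{1..int n + 1}. card (T b))"
    unfolding T_def by (rule card_ncl_partitions_by_first_block_Max) simp
  also have "\<dots> = card (T 1) + (\<Sum>b\<in>{2..int n + 1}. card (T b))"
  proof -
    have "{1..int n + 1} = insert 1 {2..int n + 1}" by auto
    then show ?thesis by simp
  qed
  also have "card (T 1) = ncl_count n"
    using card_ncl_partitions_first_block_singleton[of 1 "int n + 1"] by (simp add: T_def)
  also have "(\<Sum>b\<in>{2..int n + 1}. card (T b)) = (\<Sum>k=1..n. ncl_count k * ncl_count (n + 1 - k))"
  proof (rule sum.reindex_bij_witness[where i = "\<lambda>k. int k + 1" and j = "\<lambda>b. nat (b - 1)"])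
    fix b assume b: "b \<in> {2..int n + 1}"
    have "n + 1 - nat (b - 1) = nat (int n + 1 - b + 1)" using b by auto
    then have "card (T b) = ncl_count (nat (b - 1)) * ncl_count (n + 1 - nat (b - 1))"
      using card_ncl_partitions_first_block_Max[of 1 b "int n + 1"] card_ncl_partitions_joining_ends[of 1 b]
        card_ncl_partitions_interval[of 1 "b - 1"] card_ncl_partitions_interval[of b "int n + 1"] b
      by (simp add: T_def)
    then show "ncl_count (nat (b - 1)) * ncl_count (n + 1 - nat (b - 1)) = card (T b)" by simp
  qed auto
  finally show ?thesis by simp
qed

theorem proposition2p2:
  shows "ncl_count 1 = 1 \<and>
         (\<forall>n\<ge>1. ncl_count (n + 1) = ncl_count n + (\<Sum>k=1..n. ncl_count k * ncl_count (n + 1 - k)))"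
  using ncl_count_one ncl_count_Suc by blast

end
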